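(* Let $f(w)=\frac12w^TAw-b^Tw+c$ with $A\in\mathbb{R}^{n\times n}$ symmetric positive definite with eigenvalues $0<\lambda_1\le\dots\le\lambda_n$, and let $x^*=A^{-1}b$ be its unique minimizer. Let $x^1\in\mathbb{R}^n$ be arbitrary and let $\{x^k\}$ be generated by the Method of Ellipcenters (ME) described in the context. If ME stops at some iterate $x^k$, then $x^k=x^*$. Otherwise, $x^k\to x^*$ linearly: there exists $\eta\in[0,1)$ with $\eta\le 1-\frac{\lambda_1}{\lambda_n}$ such that for all $k\ge1$, $$f(x^{k+1})-f(x^* )\le \eta^k\,(f(x^1)-f(x^* ))\quad\text{and}\quad \|x^{k+1}-x^*\|_A\le (\sqrt{\eta})^k\,\|x^1-x^*\|_A.$$
   Context: $\|z\|_A=\sqrt{z^TAz}$, $\nabla f(w)=Aw-b$. Method of Ellipcenters (ME) for this $f$: given $x^k$, if $\nabla f(x^k)=0$ stop and return $x^k$. Otherwise set $t_k=\frac{2\nabla f(x^k)^T\nabla f(x^k)}{\nabla f(x^k)^TA\nabla f(x^k)}$ and $y^k=x^k-t_k\nabla f(x^k)$. If $g_x=\nabla f(x^k)$ and $g_y=\nabla f(y^k)$ are linearly independent, set $x^{k+1}=x^k+\alpha_kg_x+\beta_kg_y$, where, with $\Delta_k=\langle g_y,Ag_y\rangle\langle g_x,Ag_x\rangle-\langle g_x,Ag_y\rangle^2$, $\alpha_k=\frac{\langle g_y,g_x\rangle\langle g_x,Ag_y\rangle-\langle g_x,g_x\rangle\langle g_y,Ag_y\rangle}{\Delta_k}$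 and $\beta_k=\frac{-\langle g_y,g_x\rangle\langle g_x,Ag_x\rangle+\langle g_x,g_x\rangle\langle g_y,Ag_x\rangle}{\Delta_k}$ (equivalently, $x^{k+1}$ is the minimizer of $f$ over the affine plane $x^k+\mathrm{span}\{g_x,g_y\}$). If $g_x,g_y$ are linearly dependent, set $x^{k+1}=\frac12(x^k+y^k)$. Then increase $k$ by one and repeat. *)

theory Defs
  imports "HOL-Analysis.Analysis"
begin

definition quad_f :: "real^'n^'n \<Rightarrow> real^'n \<Rightarrow> real \<Rightarrow> real^'n \<Rightarrow> real" where
  "quad_f A b c w = (1/2) * (w \<bullet> (A *v w)) - b \<bullet> w + c"

definition grad_f :: "real^'n^'n \<Rightarrow> real^'n \<Rightarrow> real^'n \<Rightarrow> real^'n" where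
  "grad_f A b w = A *v w - b"

definition A_norm :: "real^'n^'n \<Rightarrow> real^'n \<Rightarrow> real" where
  "A_norm A z = sqrt (z \<bullet> (A *v z))"

definition sym_pos_def :: "real^'n^'n \<Rightarrow> bool" where
  "sym_pos_def A \<longleftrightarrow> transpose A = A \<and> (\<forall>v. v \<noteq> 0 \<longrightarrow> v \<bullet> (A *v v) > 0)"

definition eigenvals :: "real^'n^'n \<Rightarrow> real set" where
  "eigenvals A = {l. \<exists>v. v \<noteq> 0 \<and> A *v v = l *\<^sub>R v}"

definition lin_indep2 :: "real^'n \<Rightarrow> real^'n \<Rightarrow> bool" where
  "lin_indep2 u v \<longleftrightarrow> (\<forall>a b. a *\<^sub>R u + b *\<^sub>R v = 0 \<longrightarrow> a = 0 \<and> b = 0)"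

definition ME_step :: "real^'n^'n \<Rightarrow> real^'n \<Rightarrow> real^'n \<Rightarrow> real^'n" where
  "ME_step A b x =
    (let gx = grad_f A b x;
         t = 2 * (gx \<bullet> gx) / (gx \<bullet> (A *v gx));
         y = x - t *\<^sub>R gx;
         gy = grad_f A b y
     in if lin_indep2 gx gy then
          (let \<Delta> = (gy \<bullet> (A *v gy)) * (gx \<bullet> (A *v gx)) - (gx \<bullet> (A *v gy))^2;
               \<alpha> = ((gy \<bullet> gx) * (gx \<bullet> (A *v gy)) - (gx \<bullet> gx) * (gy \<bullet> (A *v gy))) / \<Delta>;
               \<beta> = (- (gy \<bullet> gx) * (gx \<bullet> (A *v gx)) + (gx \<bullet> gx) * (gy \<bullet> (A *v gx))) / \<Delta>
           in x + \<alpha> *\<^sub>R gx + \<beta> *\<^sub>R gy)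
        else (1/2) *\<^sub>R (x + y))"

end

theory Submission
  imports Defs
begin

text \<open>Each ME iterate is at least as good as the exact line-search steepest descent (Cauchy)
  point \<open>x - \<tau> g\<close>, \<open>\<tau> = g\<bullet>g / g\<bullet>Ag\<close>: in the degenerate case ME returns that point, otherwise it
  minimises \<open>f\<close> over a plane containing it. With \<open>e = x - x\<^sup>*\<close> and \<open>g = Ae\<close>, the Cauchy point
  lowers \<open>f(x) - f(x\<^sup>*) = e\<bullet>g/2\<close> by \<open>(g\<bullet>g)\<^sup>2/(2 g\<bullet>Ag) \<ge> (\<lambda>\<^sub>1/\<lambda>\<^sub>n) e\<bullet>g/2\<close>, because
  \<open>g\<bullet>Ag \<le> \<lambda>\<^sub>n g\<bullet>g\<close> and \<open>g\<bullet>g \<ge> \<lambda>\<^sub>1 e\<bullet>g\<close>. Iterating this contraction gives the linear rate, and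
  \<open>\<parallel>x - x\<^sup>*\<parallel>\<^sub>A\<^sup>2 = 2 (f(x) - f(x\<^sup>*))\<close> transfers it to the \<open>A\<close>-norm. The extreme eigenvalues are
  obtained as the extrema of the Rayleigh quotient on the unit sphere.\<close>

lemma self_adjoint_psd_form_zero:
  fixes L :: "'a::real_inner \<Rightarrow> 'a"
  assumes lin: "linear L" and self_adjoint: "\<And>u w. L u \<bullet> w = u \<bullet> L w"
    and psd: "\<And>w. 0 \<le> w \<bullet> L w" and zero: "v \<bullet> L v = 0"
  shows "L v = 0"
proof (rule ccontr)
  assume "L v \<noteq> 0"
  define r where "r = L v"
  define c where "c = r \<bullet> L r"
  define s where "s = (r \<bullet> r) / (\<bar>c\<bar> + 1)"
  have rr: "r \<bullet> r > 0" using \<open>L v \<noteq> 0\<close> r_def by simp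
  then have s: "s > 0" "s * (\<bar>c\<bar> + 1) = r \<bullet> r"
    unfolding s_def by (simp_all add: add_pos_nonneg field_simps)
  have "(v - s *\<^sub>R r) \<bullet> L (v - s *\<^sub>R r) = s * (s * c - 2 * (r \<bullet> r))"
    using zero self_adjoint[of r v]
    by (simp add: linear_diff[OF lin] linear_scale[OF lin] inner_commute r_def[symmetric] c_def[symmetric] algebra_simps)
  also have "\<dots> < 0"
  proof -
    have "s * c < s * (\<bar>c\<bar> + 1)" using s(1) by (intro mult_strict_left_mono) auto
    then have "s * c < 2 * (r \<bullet> r)" using s(2) rr by linarith
    then show ?thesis using s(1) by (simp add: mult_pos_neg)
  qed
  finally show False using psd[of "v - s *\<^sub>R r"] by simp
qed

lemma self_adjoint_min_eigenvector:
  fixes L :: "'a::euclidean_space \<Rightarrow> 'a"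
  assumes lin: "linear L" and self_adjoint: "\<And>u w. L u \<bullet> w = u \<bullet> L w"
  obtains v where "norm v = 1" "L v = (v \<bullet> L v) *\<^sub>R v" "\<And>w. (v \<bullet> L v) * (w \<bullet> w) \<le> w \<bullet> L w"
proof -
  obtain u :: 'a where "norm u = 1" using vector_choose_size[OF zero_le_one] by blast
  then have "sphere (0::'a) 1 \<noteq> {}" by auto
  moreover have "continuous_on (sphere 0 1) (\<lambda>w. w \<bullet> L w)"
    using lin linear_continuous_on continuous_on_inner continuous_on_id linear_conv_bounded_linear by blast
  ultimately obtain v where "v \<in> sphere 0 1" "\<forall>u \<in> sphere 0 1. v \<bullet> L v \<le> u \<bullet> L u"
    using continuous_attains_inf[OF compact_sphere] by blast
  then have v: "norm v = 1" "\<And>u. norm u = 1 \<Longrightarrow> v \<bullet> L v \<le> u \<bullet> L u" by simp_all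
  define m where "m = v \<bullet> L v"
  have lower: "m * (w \<bullet> w) \<le> w \<bullet> L w" for w
  proof (cases "w = 0")
    case False
    have "m \<le> ((1 / norm w) *\<^sub>R w) \<bullet> L ((1 / norm w) *\<^sub>R w)"
      unfolding m_def by (rule v(2)) (use False in simp)
    also have "\<dots> = (w \<bullet> L w) / (w \<bullet> w)"
      by (simp add: linear_scale[OF lin] power2_norm_eq_inner[symmetric] power2_eq_square)
    finally show ?thesis using False by (simp add: le_divide_eq mult.commute)
  qed (simp add: linear_0[OF lin])
  have "L v - m *\<^sub>R v = 0"
  proof (rule self_adjoint_psd_form_zero[where L = "\<lambda>w. L w - m *\<^sub>R w"])
    show "linear (\<lambda>w. L w - m *\<^sub>R w)" using lin by (simp add: linear_compose_sub linear_scale_self)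
    show "(L u - m *\<^sub>R u) \<bullet> w = u \<bullet> (L w - m *\<^sub>R w)" for u w
      using self_adjoint[of u w] by (simp add: inner_diff_left inner_diff_right inner_commute)
    show "0 \<le> w \<bullet> (L w - m *\<^sub>R w)" for w using lower[of w] by (simp add: inner_diff_right)
    show "v \<bullet> (L v - m *\<^sub>R v) = 0"
      using v(1) by (simp add: inner_diff_right m_def power2_norm_eq_inner[symmetric])
  qed
  then show thesis using that v(1) lower unfolding m_def by simp
qed

lemma symmetric_matrix_inner:
  fixes A :: "real^'n^'n"
  assumes "transpose A = A"
  shows "(A *v u) \<bullet> w = u \<bullet> (A *v w)"
  by (metis assms dot_lmul_matrix transpose_matrix_vector)

lemma sym_pos_defD:
  fixes A :: "real^'n^'n"
  assumes "sym_pos_def A"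
  shows "transpose A = A" and "v \<noteq> 0 \<Longrightarrow> 0 < v \<bullet> (A *v v)" and "0 \<le> v \<bullet> (A *v v)"
proof -
  show "transpose A = A" and pos: "v \<noteq> 0 \<Longrightarrow> 0 < v \<bullet> (A *v v)"
    using assms unfolding sym_pos_def_def by auto
  show "0 \<le> v \<bullet> (A *v v)" using pos by (cases "v = 0") auto
qed

lemma finite_eigenvals:
  fixes A :: "real^'n^'n"
  assumes sym: "transpose A = A"
  shows "finite (eigenvals A)"
proof -
  have "\<forall>l \<in> eigenvals A. \<exists>v. v \<noteq> 0 \<and> A *v v = l *\<^sub>R v" unfolding eigenvals_def by blast
  then obtain ev where ev: "\<And>l. l \<in> eigenvals A \<Longrightarrow> ev l \<noteq> 0 \<and> A *v ev l = l *\<^sub>R ev l"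
    by (metis bchoice)
  have orth: "ev l \<bullet> ev k = 0" if "l \<in> eigenvals A" "k \<in> eigenvals A" "l \<noteq> k" for l k
  proof -
    have "l * (ev l \<bullet> ev k) = (A *v ev l) \<bullet> ev k" using ev[OF that(1)] by simp
    also have "\<dots> = ev l \<bullet> (A *v ev k)" by (rule symmetric_matrix_inner[OF sym])
    also have "\<dots> = k * (ev l \<bullet> ev k)" using ev[OF that(2)] by simp
    finally show ?thesis using that(3) by simp
  qed
  have "inj_on ev (eigenvals A)"
    by (rule inj_onI) (metis ev orth inner_eq_zero_iff)
  moreover have "independent (ev ` eigenvals A)"
    using orth ev by (intro pairwise_orthogonal_independent) (auto simp: pairwise_def orthogonal_def)
  then have "finite (ev ` eigenvals A)" using independent_bound by blast
  ultimately show ?thesis using finite_imageD by blast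
qed

lemma eigenvalue_bounded_by_Rayleigh:
  fixes A :: "real^'n^'n"
  assumes "l \<in> eigenvals A"
  shows "(\<forall>w. m * (w \<bullet> w) \<le> w \<bullet> (A *v w)) \<Longrightarrow> m \<le> l"
    and "(\<forall>w. w \<bullet> (A *v w) \<le> M * (w \<bullet> w)) \<Longrightarrow> l \<le> M"
proof -
  obtain v where v: "v \<noteq> 0" "A *v v = l *\<^sub>R v" using assms unfolding eigenvals_def by auto
  then have "v \<bullet> (A *v v) = l * (v \<bullet> v)" "0 < v \<bullet> v" by simp_all
  then show "(\<forall>w. m * (w \<bullet> w) \<le> w \<bullet> (A *v w)) \<Longrightarrow> m \<le> l"
    and "(\<forall>w. w \<bullet> (A *v w) \<le> M * (w \<bullet> w)) \<Longrightarrow> l \<le> M"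
    by (metis mult_le_cancel_right_pos)+
qed

lemma Rayleigh_bounds_eigenvals:
  fixes A :: "real^'n^'n"
  assumes sym: "transpose A = A"
  shows "Min (eigenvals A) \<in> eigenvals A"
    and "Min (eigenvals A) * (w \<bullet> w) \<le> w \<bullet> (A *v w)"
    and "w \<bullet> (A *v w) \<le> Max (eigenvals A) * (w \<bullet> w)"
proof -
  have self_adjoint: "(A *v u) \<bullet> w = u \<bullet> (A *v w)" for u w
    by (rule symmetric_matrix_inner[OF sym])
  have lin: "linear ((*v) A)" by (rule matrix_vector_mul_linear)
  obtain v where v: "norm v = 1" "A *v v = (v \<bullet> (A *v v)) *\<^sub>R v"
    and lower: "\<And>w. (v \<bullet> (A *v v)) * (w \<bullet> w) \<le> w \<bullet> (A *v w)"
    using self_adjoint_min_eigenvector[OF lin self_adjoint] by blast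
  have min: "v \<bullet> (A *v v) \<in> eigenvals A"
    using v unfolding eigenvals_def by (intro CollectI exI[of _ v]) auto
  have "- (A *v u) \<bullet> w = u \<bullet> - (A *v w)" for u w by (simp add: self_adjoint)
  then obtain u where u: "norm u = 1" "- (A *v u) = (u \<bullet> - (A *v u)) *\<^sub>R u"
    and upper: "\<And>w. (u \<bullet> - (A *v u)) * (w \<bullet> w) \<le> w \<bullet> - (A *v w)"
    using self_adjoint_min_eigenvector[OF linear_compose_neg[OF lin]] by blast
  have max: "u \<bullet> (A *v u) \<in> eigenvals A"
    using u unfolding eigenvals_def by (intro CollectI exI[of _ u]) auto
  have fin: "finite (eigenvals A)" by (rule finite_eigenvals[OF sym])
  have "Min (eigenvals A) = v \<bullet> (A *v v)"
    using min lower eigenvalue_bounded_by_Rayleigh(1) by (intro Min_eqI[OF fin]) auto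
  moreover have "Max (eigenvals A) = u \<bullet> (A *v u)"
    using max upper eigenvalue_bounded_by_Rayleigh(2) by (intro Max_eqI[OF fin]) auto
  ultimately show "Min (eigenvals A) \<in> eigenvals A"
    and "Min (eigenvals A) * (w \<bullet> w) \<le> w \<bullet> (A *v w)"
    and "w \<bullet> (A *v w) \<le> Max (eigenvals A) * (w \<bullet> w)"
    using min lower upper[of w] by auto
qed

lemma sym_pos_def_eigenvals:
  fixes A :: "real^'n^'n"
  assumes spd: "sym_pos_def A"
  shows "0 < Min (eigenvals A)" and "Min (eigenvals A) \<le> Max (eigenvals A)"
proof -
  have sym: "transpose A = A" by (rule sym_pos_defD(1)[OF spd])
  obtain v where v: "v \<noteq> 0" "A *v v = Min (eigenvals A) *\<^sub>R v"
    using Rayleigh_bounds_eigenvals(1)[OF sym] unfolding eigenvals_def by blast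
  have "0 < v \<bullet> (A *v v)" by (rule sym_pos_defD(2)[OF spd v(1)])
  then have "0 < Min (eigenvals A) * (v \<bullet> v)" using v(2) by simp
  then show "0 < Min (eigenvals A)" by (rule zero_less_mult_pos2) (use v(1) in simp)
  have "Min (eigenvals A) * (v \<bullet> v) \<le> Max (eigenvals A) * (v \<bullet> v)"
    using Rayleigh_bounds_eigenvals(2,3)[OF sym, of v] by linarith
  then show "Min (eigenvals A) \<le> Max (eigenvals A)" using v(1) by simp
qed

lemma quad_f_add:
  fixes A :: "real^'n^'n"
  assumes "transpose A = A"
  shows "quad_f A b c (u + h) = quad_f A b c u + grad_f A b u \<bullet> h + 1/2 * (h \<bullet> (A *v h))"
  using symmetric_matrix_inner[OF assms, of h u]
  unfolding quad_f_def grad_f_def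
  by (simp add: algebra_simps inner_commute)

lemma quad_f_minus_minimum:
  fixes A :: "real^'n^'n"
  assumes "transpose A = A" and "A *v xs = b"
  shows "quad_f A b c z - quad_f A b c xs = 1/2 * ((z - xs) \<bullet> (A *v (z - xs)))"
  using quad_f_add[OF assms(1), of b c xs "z - xs"] assms(2) by (simp add: grad_f_def)

lemma quad_f_le_if_grad_orthogonal:
  fixes A :: "real^'n^'n"
  assumes "sym_pos_def A" and "grad_f A b z \<bullet> h = 0"
  shows "quad_f A b c z \<le> quad_f A b c (z + h)"
  using quad_f_add[OF sym_pos_defD(1)[OF assms(1)], of b c z h] sym_pos_defD(3)[OF assms(1), of h] assms(2)
  by simp

lemma quad_f_Cauchy_step:
  fixes A :: "real^'n^'n"
  assumes "transpose A = A" and "g = grad_f A b x"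
  shows "quad_f A b c (x - ((g \<bullet> g) / (g \<bullet> (A *v g))) *\<^sub>R g)
    = quad_f A b c x - (g \<bullet> g)\<^sup>2 / (2 * (g \<bullet> (A *v g)))"
proof -
  have "quad_f A b c (x + (- ((g \<bullet> g) / (g \<bullet> (A *v g)))) *\<^sub>R g)
    = quad_f A b c x - (g \<bullet> g) / (g \<bullet> (A *v g)) * (g \<bullet> g)
      + 1/2 * ((g \<bullet> g) / (g \<bullet> (A *v g)))\<^sup>2 * (g \<bullet> (A *v g))"
    unfolding quad_f_add[OF assms(1)] assms(2)[symmetric] matrix_vector_mult_scaleR
      inner_scaleR_left inner_scaleR_right
    by (simp add: power2_eq_square)
  \<comment> \<open>If \<open>g \<bullet> (A *v g) = 0\<close>, division by zero makes the step and the decrease both \<open>0\<close>.\<close>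
  then show ?thesis
    by (cases "g \<bullet> (A *v g) = 0") (simp_all add: power2_eq_square)
qed

lemma gradient_norm_lower_bound:
  fixes A :: "real^'n^'n"
  assumes spd: "sym_pos_def A" and g: "g = A *v e"
  shows "Min (eigenvals A) * (e \<bullet> g) \<le> g \<bullet> g"
proof (cases "e = 0")
  case False
  let ?m = "Min (eigenvals A)"
  have eg: "0 < e \<bullet> g" using sym_pos_defD(2)[OF spd False] g by simp
  have "?m * (e \<bullet> g) * (e \<bullet> g) \<le> ?m * ((e \<bullet> e) * (g \<bullet> g))"
    using Cauchy_Schwarz_ineq[of e g] sym_pos_def_eigenvals(1)[OF spd]
    by (simp add: power2_eq_square mult_left_mono)
  also have "\<dots> = (?m * (e \<bullet> e)) * (g \<bullet> g)" by simp
  also have "\<dots> \<le> (e \<bullet> g) * (g \<bullet> g)"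
    using Rayleigh_bounds_eigenvals(2)[OF sym_pos_defD(1)[OF spd], of e] g
    by (intro mult_right_mono) simp_all
  finally show ?thesis using eg by (simp add: mult.commute)
qed (simp add: g)

lemma Cauchy_step_contraction:
  fixes A :: "real^'n^'n"
  assumes spd: "sym_pos_def A" and gnz: "g \<noteq> 0" and g: "g = grad_f A b x" and xs: "A *v xs = b"
  shows "quad_f A b c (x - ((g \<bullet> g) / (g \<bullet> (A *v g))) *\<^sub>R g) - quad_f A b c xs
    \<le> (1 - Min (eigenvals A) / Max (eigenvals A)) * (quad_f A b c x - quad_f A b c xs)"
proof -
  let ?m = "Min (eigenvals A)" and ?M = "Max (eigenvals A)"
  have sym: "transpose A = A" by (rule sym_pos_defD(1)[OF spd])
  define e where "e = x - xs"
  have ge: "g = A *v e" using g xs by (simp add: e_def grad_f_def matrix_vector_mult_diff_distrib)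
  have Ex: "quad_f A b c x - quad_f A b c xs = 1/2 * (e \<bullet> g)"
    using quad_f_minus_minimum[OF sym xs, of c x] by (simp add: e_def ge)
  have gAg: "0 < g \<bullet> (A *v g)" by (rule sym_pos_defD(2)[OF spd gnz])
  have M: "0 < ?M" using sym_pos_def_eigenvals[OF spd] by linarith
  have "?m / ?M * (e \<bullet> g) * (g \<bullet> (A *v g)) \<le> ?m / ?M * (e \<bullet> g) * (?M * (g \<bullet> g))"
    using Rayleigh_bounds_eigenvals(3)[OF sym, of g] sym_pos_def_eigenvals(1)[OF spd] M
      sym_pos_defD(3)[OF spd, of e] ge
    by (intro mult_left_mono) simp_all
  also have "\<dots> = (?m * (e \<bullet> g)) * (g \<bullet> g)" using M by simp
  also have "\<dots> \<le> (g \<bullet> g)\<^sup>2"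
    using gradient_norm_lower_bound[OF spd ge] by (simp add: power2_eq_square mult_right_mono)
  finally have decrease: "?m / ?M * (1/2 * (e \<bullet> g)) \<le> (g \<bullet> g)\<^sup>2 / (2 * (g \<bullet> (A *v g)))"
    using gAg by (simp add: field_simps)
  have "quad_f A b c (x - ((g \<bullet> g) / (g \<bullet> (A *v g))) *\<^sub>R g) - quad_f A b c xs
      = 1/2 * (e \<bullet> g) - (g \<bullet> g)\<^sup>2 / (2 * (g \<bullet> (A *v g)))"
    using quad_f_Cauchy_step[OF sym g, of c] Ex by simp
  also have "\<dots> \<le> 1/2 * (e \<bullet> g) - ?m / ?M * (1/2 * (e \<bullet> g))" using decrease by linarith
  also have "\<dots> = (1 - ?m / ?M) * (quad_f A b c x - quad_f A b c xs)" unfolding Ex by (simp add: algebra_simps)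
  finally show ?thesis .
qed

lemma Gram_det_pos_if_lin_indep2:
  fixes A :: "real^'n^'n"
  assumes spd: "sym_pos_def A" and indep: "lin_indep2 u v"
  shows "0 < (v \<bullet> (A *v v)) * (u \<bullet> (A *v u)) - (u \<bullet> (A *v v))\<^sup>2"
proof -
  have "u \<noteq> 0"
    using indep unfolding lin_indep2_def by (metis add.right_neutral scaleR_one scaleR_zero_left zero_neq_one)
  then have uAu: "0 < u \<bullet> (A *v u)" by (rule sym_pos_defD(2)[OF spd])
  define w where "w = (u \<bullet> (A *v u)) *\<^sub>R v - (u \<bullet> (A *v v)) *\<^sub>R u"
  have "w \<noteq> 0"
  proof
    assume "w = 0"
    then have "(- (u \<bullet> (A *v v))) *\<^sub>R u + (u \<bullet> (A *v u)) *\<^sub>R v = 0" by (simp add: w_def)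
    then have "u \<bullet> (A *v u) = 0" using indep unfolding lin_indep2_def by blast
    with uAu show False by simp
  qed
  then have "0 < w \<bullet> (A *v w)" by (rule sym_pos_defD(2)[OF spd])
  also have "w \<bullet> (A *v w)
      = (u \<bullet> (A *v u)) * ((v \<bullet> (A *v v)) * (u \<bullet> (A *v u)) - (u \<bullet> (A *v v))\<^sup>2)"
    using symmetric_matrix_inner[OF sym_pos_defD(1)[OF spd], of u v]
    by (simp add: w_def matrix_vector_mult_diff_distrib matrix_vector_mult_scaleR inner_diff_left
        inner_diff_right inner_commute power2_eq_square algebra_simps)
  finally show ?thesis using uAu by (simp add: zero_less_mult_iff)
qed

lemma symmetric_2x2_Cramer:
  fixes a p d s r :: real
  assumes "d * a - p\<^sup>2 \<noteq> 0"
  shows "s + (r * p - s * d) / (d * a - p\<^sup>2) * a + (- r * a + s * p) / (d * a - p\<^sup>2) * p = 0"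
    and "r + (r * p - s * d) / (d * a - p\<^sup>2) * p + (- r * a + s * p) / (d * a - p\<^sup>2) * d = 0"
  using assms by (simp_all add: field_simps power2_eq_square)

lemma grad_plane_minimizer_orthogonal:
  fixes A :: "real^'n^'n"
  assumes sym: "transpose A = A" and gx: "gx = grad_f A b x"
    and \<Delta>: "\<Delta> = (gy \<bullet> (A *v gy)) * (gx \<bullet> (A *v gx)) - (gx \<bullet> (A *v gy))\<^sup>2" "\<Delta> \<noteq> 0"
    and \<alpha>: "\<alpha> = ((gy \<bullet> gx) * (gx \<bullet> (A *v gy)) - (gx \<bullet> gx) * (gy \<bullet> (A *v gy))) / \<Delta>"
    and \<beta>: "\<beta> = (- (gy \<bullet> gx) * (gx \<bullet> (A *v gx)) + (gx \<bullet> gx) * (gy \<bullet> (A *v gx))) / \<Delta>"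
  shows "grad_f A b (x + \<alpha> *\<^sub>R gx + \<beta> *\<^sub>R gy) \<bullet> gx = 0"
    and "grad_f A b (x + \<alpha> *\<^sub>R gx + \<beta> *\<^sub>R gy) \<bullet> gy = 0"
proof -
  have grad: "grad_f A b (x + \<alpha> *\<^sub>R gx + \<beta> *\<^sub>R gy) = gx + \<alpha> *\<^sub>R (A *v gx) + \<beta> *\<^sub>R (A *v gy)"
    by (simp add: gx grad_f_def algebra_simps)
  have ip: "(A *v gx) \<bullet> gx = gx \<bullet> (A *v gx)" "(A *v gy) \<bullet> gx = gx \<bullet> (A *v gy)"
    "(A *v gx) \<bullet> gy = gx \<bullet> (A *v gy)" "gy \<bullet> (A *v gx) = gx \<bullet> (A *v gy)"
    "(A *v gy) \<bullet> gy = gy \<bullet> (A *v gy)" "gx \<bullet> gy = gy \<bullet> gx"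
    using symmetric_matrix_inner[OF sym, of gx gy] symmetric_matrix_inner[OF sym, of gy gx]
    by (simp_all add: inner_commute)
  have "gx \<bullet> gx + \<alpha> * (gx \<bullet> (A *v gx)) + \<beta> * (gx \<bullet> (A *v gy)) = 0"
    "gy \<bullet> gx + \<alpha> * (gx \<bullet> (A *v gy)) + \<beta> * (gy \<bullet> (A *v gy)) = 0"
    using symmetric_2x2_Cramer[where a = "gx \<bullet> (A *v gx)" and p = "gx \<bullet> (A *v gy)"
        and d = "gy \<bullet> (A *v gy)" and s = "gx \<bullet> gx" and r = "gy \<bullet> gx"]
      \<Delta> unfolding \<alpha> \<beta> ip(4) by simp_all
  then show "grad_f A b (x + \<alpha> *\<^sub>R gx + \<beta> *\<^sub>R gy) \<bullet> gx = 0"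
    and "grad_f A b (x + \<alpha> *\<^sub>R gx + \<beta> *\<^sub>R gy) \<bullet> gy = 0"
    unfolding grad by (simp_all add: inner_add_left ip)
qed

lemma quad_f_ME_step_le_Cauchy_step:
  fixes A :: "real^'n^'n"
  assumes spd: "sym_pos_def A" and g: "g = grad_f A b x"
  shows "quad_f A b c (ME_step A b x) \<le> quad_f A b c (x - ((g \<bullet> g) / (g \<bullet> (A *v g))) *\<^sub>R g)"
proof -
  define \<tau> where "\<tau> = (g \<bullet> g) / (g \<bullet> (A *v g))"
  define y where "y = x - (2 * (g \<bullet> g) / (g \<bullet> (A *v g))) *\<^sub>R g"
  define gy where "gy = grad_f A b y"
  define \<Delta> where "\<Delta> = (gy \<bullet> (A *v gy)) * (g \<bullet> (A *v g)) - (g \<bullet> (A *v gy))\<^sup>2"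
  define \<alpha> where "\<alpha> = ((gy \<bullet> g) * (g \<bullet> (A *v gy)) - (g \<bullet> g) * (gy \<bullet> (A *v gy))) / \<Delta>"
  define \<beta> where "\<beta> = (- (gy \<bullet> g) * (g \<bullet> (A *v g)) + (g \<bullet> g) * (gy \<bullet> (A *v g))) / \<Delta>"
  have ME: "ME_step A b x = (if lin_indep2 g gy then x + \<alpha> *\<^sub>R g + \<beta> *\<^sub>R gy else (1/2) *\<^sub>R (x + y))"
    unfolding ME_step_def Let_def g[symmetric] y_def[symmetric] gy_def[symmetric]
      \<Delta>_def[symmetric] \<alpha>_def[symmetric] \<beta>_def[symmetric] ..
  show ?thesis
  proof (cases "lin_indep2 g gy")
    case True
    define z where "z = x + \<alpha> *\<^sub>R g + \<beta> *\<^sub>R gy"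
    have "\<Delta> \<noteq> 0" using Gram_det_pos_if_lin_indep2[OF spd True] by (simp add: \<Delta>_def)
    then have "grad_f A b z \<bullet> g = 0" "grad_f A b z \<bullet> gy = 0"
      using grad_plane_minimizer_orthogonal[OF sym_pos_defD(1)[OF spd] g \<Delta>_def _ \<alpha>_def \<beta>_def]
      by (simp_all add: z_def)
    then have "quad_f A b c z \<le> quad_f A b c (z + ((- \<tau> - \<alpha>) *\<^sub>R g - \<beta> *\<^sub>R gy))"
      by (intro quad_f_le_if_grad_orthogonal[OF spd]) (simp add: inner_diff_right)
    also have "z + ((- \<tau> - \<alpha>) *\<^sub>R g - \<beta> *\<^sub>R gy) = x - \<tau> *\<^sub>R g"
      by (simp add: z_def algebra_simps)
    finally show ?thesis using ME True by (simp add: z_def \<tau>_def)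
  next
    case False
    have "(1/2) *\<^sub>R (x + y) = x - \<tau> *\<^sub>R g"
      by (simp add: y_def \<tau>_def algebra_simps scaleR_2[symmetric])
    then show ?thesis using ME False by (simp add: \<tau>_def)
  qed
qed

lemma ME_step_contraction:
  fixes A :: "real^'n^'n"
  assumes spd: "sym_pos_def A" and "grad_f A b x \<noteq> 0" and "A *v xs = b"
  shows "quad_f A b c (ME_step A b x) - quad_f A b c xs
    \<le> (1 - Min (eigenvals A) / Max (eigenvals A)) * (quad_f A b c x - quad_f A b c xs)"
  using quad_f_ME_step_le_Cauchy_step[OF spd refl, where b=b and x=x and c=c]
    Cauchy_step_contraction[OF spd assms(2) refl assms(3), of c]
  by linarith

lemma sym_pos_def_solve:
  fixes A :: "real^'n^'n"
  assumes "sym_pos_def A"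
  shows "A *v z = b \<longleftrightarrow> z = matrix_inv A *v b"
proof -
  have "invertible A"
    using sym_pos_defD(2)[OF assms] matrix_left_invertible_ker invertible_left_inverse
    by (metis inner_zero_right less_irrefl)
  then have inv: "A ** matrix_inv A = mat 1" "matrix_inv A ** A = mat 1"
    unfolding matrix_inv_def invertible_def by (metis (mono_tags, lifting) someI_ex)+
  show ?thesis
    by (metis inv matrix_vector_mul_assoc matrix_vector_mul_lid)
qed

lemma A_norm_minus_minimum:
  fixes A :: "real^'n^'n"
  assumes "transpose A = A" and "A *v xs = b"
  shows "A_norm A (z - xs) = sqrt (2 * (quad_f A b c z - quad_f A b c xs))"
  unfolding A_norm_def quad_f_minus_minimum[OF assms] by simp

lemma geometric_decay:
  fixes E :: "nat \<Rightarrow> real"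
  assumes "0 \<le> \<eta>" and step: "\<And>k. 1 \<le> k \<Longrightarrow> E (Suc k) \<le> \<eta> * E k" and "1 \<le> k"
  shows "E (Suc k) \<le> \<eta> ^ k * E 1"
  using \<open>1 \<le> k\<close>
proof (induction k rule: dec_induct)
  case base
  show ?case using step[of 1] by simp
next
  case (step k)
  have "E (Suc (Suc k)) \<le> \<eta> * E (Suc k)" using assms(2) by simp
  also have "\<dots> \<le> \<eta> * (\<eta> ^ k * E 1)" using step.IH \<open>0 \<le> \<eta>\<close> by (rule mult_left_mono)
  finally show ?case by simp
qed

theorem mainTheorem4:
  fixes A :: "real^'n^'n" and b :: "real^'n" and c :: real and x :: "nat \<Rightarrow> real^'n"
  assumes spd: "sym_pos_def A"
    and iter: "\<And>k. k \<ge> 1 \<Longrightarrow> grad_f A b (x k) \<noteq> 0 \<Longrightarrow> x (Suc k) = ME_step A b (x k)"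
  shows "(\<forall>k\<ge>1. grad_f A b (x k) = 0 \<longrightarrow> x k = matrix_inv A *v b)
    \<and> ((\<forall>k\<ge>1. grad_f A b (x k) \<noteq> 0) \<longrightarrow>
        (\<exists>\<eta>. 0 \<le> \<eta> \<and> \<eta> < 1 \<and> \<eta> \<le> 1 - Min (eigenvals A) / Max (eigenvals A) \<and>
          (\<forall>k\<ge>1.
             quad_f A b c (x (Suc k)) - quad_f A b c (matrix_inv A *v b)
               \<le> \<eta> ^ k * (quad_f A b c (x 1) - quad_f A b c (matrix_inv A *v b))
           \<and> A_norm A (x (Suc k) - matrix_inv A *v b)
               \<le> sqrt \<eta> ^ k * A_norm A (x 1 - matrix_inv A *v b))))"
proof (intro conjI allI impI)
  define xs where "xs = matrix_inv A *v b"
  have sym: "transpose A = A" and Axs: "A *v xs = b"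
    using sym_pos_defD(1)[OF spd] sym_pos_def_solve[OF spd] by (simp_all add: xs_def)
  show "x k = matrix_inv A *v b" if "grad_f A b (x k) = 0" for k
    using that sym_pos_def_solve[OF spd] by (simp add: grad_f_def)
  assume nonzero: "\<forall>k\<ge>1. grad_f A b (x k) \<noteq> 0"
  define \<eta> where "\<eta> = 1 - Min (eigenvals A) / Max (eigenvals A)"
  define E where "E k = quad_f A b c (x k) - quad_f A b c xs" for k
  have \<eta>: "0 \<le> \<eta>" "\<eta> < 1"
    using sym_pos_def_eigenvals[OF spd] by (simp_all add: \<eta>_def divide_le_eq_1)
  have "E (Suc k) \<le> \<eta> * E k" if "k \<ge> 1" for k
    using ME_step_contraction[OF spd _ Axs, of "x k" c] iter[OF that] nonzero that
    by (simp add: E_def \<eta>_def)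
  then have decay: "E (Suc k) \<le> \<eta> ^ k * E 1" if "k \<ge> 1" for k
    using geometric_decay[OF \<eta>(1) _ that] by blast
  have A_norm_decay: "A_norm A (x (Suc k) - xs) \<le> sqrt \<eta> ^ k * A_norm A (x 1 - xs)" if "k \<ge> 1" for k
    unfolding A_norm_minus_minimum[OF sym Axs, of _ c] E_def[symmetric]
    using decay[OF that] by (simp add: real_sqrt_mult[symmetric] real_sqrt_power[symmetric])
  show "\<exists>\<eta>. 0 \<le> \<eta> \<and> \<eta> < 1 \<and> \<eta> \<le> 1 - Min (eigenvals A) / Max (eigenvals A) \<and>
          (\<forall>k\<ge>1.
             quad_f A b c (x (Suc k)) - quad_f A b c (matrix_inv A *v b)
               \<le> \<eta> ^ k * (quad_f A b c (x 1) - quad_f A b c (matrix_inv A *v b))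
           \<and> A_norm A (x (Suc k) - matrix_inv A *v b)
               \<le> sqrt \<eta> ^ k * A_norm A (x 1 - matrix_inv A *v b))"
    using \<eta> decay A_norm_decay unfolding E_def xs_def
    by (intro exI[of _ \<eta>]) (simp add: \<eta>_def)
qed

end
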